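(* Let $\lambda\ge0$ and $t\in[0,\tilde p]$. The penalised conjugate gradient estimator satisfies $$\big\|\widehat\Sigma_\lambda^{1/2}(\hat\beta^{\mathrm{CG}}_{\lambda,t}-\beta_\lambda)\big\|^2\le 2\,\big\|\widehat\Sigma_\lambda^{1/2}\exp(-\rho_t\widehat\Sigma_\lambda/2)\beta_\lambda\big\|^2+2\,\big\|(\rho_t\widehat\Sigma_\lambda\wedge 1)^{1/2}\varepsilon_\lambda\big\|^2,$$ where $\rho_t=|(R^{\mathrm{CG}}_t)'(0)|$ and $(\rho_t\widehat\Sigma_\lambda\wedge1)^{1/2}$ denotes the matrix $f(\widehat\Sigma_\lambda)$ for $f(x)=(\rho_tx\wedge1)^{1/2}$, $x\ge0$.
   Context: Let $n,p\in\mathbb{N}$. Observations $(x_i,y_i)$, $i=1,\dots,n$, are i.i.d. with $x_i\in\mathbb{R}^p$, $y_i\in\mathbb{R}$, $y_i=x_i^\top\beta_0+\varepsilon_i$, $\mathbb{E}[\varepsilon_i\mid x_i]=0$, $\operatorname{Var}(\varepsilon_i\mid x_i)=\sigma^2>0$. $X\in\mathbb{R}^{n\times p}$ has rows $x_i^\top$, $y=(y_i)$, $\varepsilon=(\varepsilon_i)$; assume $\beta_0=X^+X\beta_0$. Matrix functions are defined by functional calculus. $\widehat\Sigma=\frac1nX^\top X$ has eigenvalues $s_1\ge\dots\ge s_p\ge0$ with orthonormal eigenvectors $v_1,\dots,v_p$; $\widehat\Sigma_\lambda=\widehat\Sigma+\lambda I_p$, $\widehat\Sigma_0^{-1}:=\widehat\Sigma^+$,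 $\widehat\Sigma_\lambda^{-1/2}=(\widehat\Sigma_\lambda^{-1})^{1/2}$. Define $y_\lambda=\frac1n\widehat\Sigma_\lambda^{-1/2}X^\top y$, $\beta_\lambda=\widehat\Sigma_\lambda^{-1}\widehat\Sigma\beta_0$, $\varepsilon_\lambda=\frac1n\widehat\Sigma_\lambda^{-1/2}X^\top\varepsilon$. Conjugate gradients: let $\tilde p$ be the number of distinct eigenvalues of $\widehat\Sigma_\lambda$, and assume $\sum_{j:\,s_j=s_i}\langle X^\top y,v_j\rangle^2>0$ for all $i=1,\dots,p$. For $k=0,\dots,\tilde p$ let $R^{\mathrm{CG}}_k$ be the minimiser of $\|P(\widehat\Sigma_\lambda)y_\lambda\|^2$ over polynomials $P$ of degree $k$ with $P(0)=1$ (so $R^{\mathrm{CG}}_0\equiv1$). For $t=k+\alpha$ with $k\in\{0,\dots,\tilde p-1\}$, $\alpha\in(0,1]$, set $R^{\mathrm{CG}}_t=(1-\alpha)R^{\mathrm{CG}}_k+\alpha R^{\mathrm{CG}}_{k+1}$. The (interpolated) CG estimator is $\hat\beta^{\mathrm{CG}}_{\lambda,t}=\widehat\Sigma_\lambda^{-1/2}(I_p-R^{\mathrm{CG}}_t(\widehat\Sigma_\lambda))y_\lambda$, $t\in[0,\tilde p]$; for integer $t=k$ these are the iterates of the conjugate gradient algorithm started at $0$ for minimising $\frac1{2n}\|y-X\beta\|^2+\frac\lambda2\|\beta\|^2$. *)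

theory Defs
  imports "HOL-Analysis.Analysis" "HOL-Computational_Algebra.Polynomial"
begin

definition outer :: "real^'n \<Rightarrow> real^'n^'n" where
  "outer v = (\<chi> a b. v$a * v$b)"

definition matfun :: "(real \<Rightarrow> real) \<Rightarrow> real^'n^'n \<Rightarrow> real^'n^'n" where
  "matfun f A = (SOME B. \<exists>(v::'n \<Rightarrow> real^'n) (s::'n \<Rightarrow> real).
      (\<forall>i j. v i \<bullet> v j = (if i = j then 1 else 0)) \<and>
      (\<forall>i. A *v v i = s i *\<^sub>R v i) \<and>
      B = (\<Sum>i\<in>UNIV. f (s i) *\<^sub>R outer (v i)))"

definition pinv :: "real^'m^'n \<Rightarrow> real^'n^'m" where
  "pinv A = (THE B. A ** B ** A = A \<and> B ** A ** B = B \<and>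
       transpose (A ** B) = A ** B \<and> transpose (B ** A) = B ** A)"

definition Sigma_hat :: "real^'p^'n \<Rightarrow> real^'p^'p" where
  "Sigma_hat X = (1 / real CARD('n)) *\<^sub>R (transpose X ** X)"

definition Sigma_lam :: "real \<Rightarrow> real^'p^'n \<Rightarrow> real^'p^'p" where
  "Sigma_lam lam X = Sigma_hat X + lam *\<^sub>R mat 1"

definition Sigma_lam_inv :: "real \<Rightarrow> real^'p^'n \<Rightarrow> real^'p^'p" where
  "Sigma_lam_inv lam X = (if lam = 0 then pinv (Sigma_hat X) else matrix_inv (Sigma_lam lam X))"

definition Sigma_lam_invsqrt :: "real \<Rightarrow> real^'p^'n \<Rightarrow> real^'p^'p" where
  "Sigma_lam_invsqrt lam X = matfun sqrt (Sigma_lam_inv lam X)"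

definition y_lam :: "real \<Rightarrow> real^'p^'n \<Rightarrow> real^'n \<Rightarrow> real^'p" where
  "y_lam lam X y = (1 / real CARD('n)) *\<^sub>R (Sigma_lam_invsqrt lam X *v (transpose X *v y))"

definition beta_lam :: "real \<Rightarrow> real^'p^'n \<Rightarrow> real^'p \<Rightarrow> real^'p" where
  "beta_lam lam X beta0 = Sigma_lam_inv lam X *v (Sigma_hat X *v beta0)"

definition eps_lam :: "real \<Rightarrow> real^'p^'n \<Rightarrow> real^'n \<Rightarrow> real^'p" where
  "eps_lam lam X eps = (1 / real CARD('n)) *\<^sub>R (Sigma_lam_invsqrt lam X *v (transpose X *v eps))"

definition num_distinct_eigs :: "real^'n^'n \<Rightarrow> nat" where
  "num_distinct_eigs S = card {c. \<exists>v. v \<noteq> 0 \<and> S *v v = c *\<^sub>R v}"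

definition cg_poly :: "real^'n^'n \<Rightarrow> real^'n \<Rightarrow> nat \<Rightarrow> real poly" where
  "cg_poly S b k = (THE P. degree P \<le> k \<and> poly P 0 = 1 \<and>
      (\<forall>Q. degree Q \<le> k \<and> poly Q 0 = 1 \<longrightarrow>
          (norm (matfun (poly P) S *v b))\<^sup>2 \<le> (norm (matfun (poly Q) S *v b))\<^sup>2))"

text \<open>Interpolated residual polynomial R_t: for t = k + alpha, alpha in (0,1],
  R_t = (1-alpha) R_k + alpha R_{k+1}; R_0 = R^CG_0.\<close>
definition cg_poly_interp :: "real^'n^'n \<Rightarrow> real^'n \<Rightarrow> real \<Rightarrow> real poly" where
  "cg_poly_interp S b t =
     (if t \<le> 0 then cg_poly S b 0
      else (let k = nat (\<lceil>t\<rceil> - 1); \<alpha> = t - real k in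
            smult (1 - \<alpha>) (cg_poly S b k) + smult \<alpha> (cg_poly S b (Suc k))))"

definition beta_cg :: "real \<Rightarrow> real^'p^'n \<Rightarrow> real^'n \<Rightarrow> real \<Rightarrow> real^'p" where
  "beta_cg lam X y t =
     Sigma_lam_invsqrt lam X *v
       ((mat 1 - matfun (poly (cg_poly_interp (Sigma_lam lam X) (y_lam lam X y) t)) (Sigma_lam lam X))
          *v y_lam lam X y)"

definition rho_cg :: "real \<Rightarrow> real^'p^'n \<Rightarrow> real^'n \<Rightarrow> real \<Rightarrow> real" where
  "rho_cg lam X y t = \<bar>poly (pderiv (cg_poly_interp (Sigma_lam lam X) (y_lam lam X y) t)) 0\<bar>"

end

theory Submission
  imports Defs
begin

(*
  In the eigenbasis of Sigma_lambda (eigenvalues mu_i, all positive by nondeg) everything becomes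
  scalar. Writing Y_i, E_i for the coordinates of y_lambda and eps_lambda, the CG residual
  polynomial R_k minimises sum_i Y_i^2 P(mu_i)^2 among polynomials of degree at most k with
  P(0) = 1, so it is orthogonal to every polynomial of degree at most k vanishing at 0. For
  t in (k, k+1] this orthogonality forces R_t to have at least k sign changes on (0, oo), and the
  alternating signs of the leading coefficients of R_k provide one more positive root. Hence
  R_t(x) = prod_j (1 - x/z_j) with all z_j > 0 and rho_t = sum_j 1/z_j. Below the smallest root x_1
  this gives 1 - rho_t x <= R_t(x) <= exp(-rho_t x); beyond it, writing R_t = (1 - x/x_1) phi, the
  nonnegative weighted inner product of R_t with x phi absorbs the excess. A coordinatewise
  inequality then sums to the bound.
*)

section \<open>Real polynomials with positive roots\<close>

lemma poly_sign_const_on_pos_if_no_pos_root: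
  fixes H :: "real poly"
  assumes "\<forall>z>0. poly H z \<noteq> 0"
  shows "(\<forall>x>0. poly H x \<ge> 0) \<or> (\<forall>x>0. poly H x \<le> 0)"
proof (rule ccontr)
  assume "\<not> ?thesis"
  then obtain a b where ab: "a > 0" "poly H a < 0" "b > 0" "poly H b > 0"
    by (auto simp: not_le)
  have "\<exists>z>0. poly H z = 0"
  proof (cases "a < b")
    case True
    with ab poly_IVT_pos[of a b H] show ?thesis by (metis order.strict_trans)
  next
    case False
    hence "b < a" using ab by (cases "a = b") auto
    with ab poly_IVT_neg[of b a H] show ?thesis by (metis order.strict_trans)
  qed
  with assms show False by blast
qed

lemma poly_sign_const_on_pos_if_even_roots:
  fixes H :: "real poly"
  assumes "H \<noteq> 0" "\<forall>z>0. poly H z = 0 \<longrightarrow> even (order z H)"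
  shows "(\<forall>x>0. poly H x \<ge> 0) \<or> (\<forall>x>0. poly H x \<le> 0)"
  using assms
proof (induction "degree H" arbitrary: H rule: less_induct)
  case less
  show ?case
  proof (cases "\<exists>z>0. poly H z = 0")
    case False
    thus ?thesis by (intro poly_sign_const_on_pos_if_no_pos_root) blast
  next
    case True
    then obtain z where z: "z > 0" "poly H z = 0" by blast
    have "order z H \<noteq> 0" using z less.prems(1) order_root by blast
    moreover have "even (order z H)" using less.prems(2) z by blast
    ultimately have "[:-z,1:]^2 dvd H" using order_divides by fastforce
    then obtain H' where H': "H = [:-z,1:]^2 * H'" by (auto simp: dvd_def)
    have "H' \<noteq> 0" using less.prems(1) H' by auto
    have "degree H = 2 + degree H'"
      using H' \<open>H' \<noteq> 0\<close> degree_linear_power[of "-z" 2] by (simp add: degree_mult_eq)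
    moreover have "\<forall>z'>0. poly H' z' = 0 \<longrightarrow> even (order z' H')"
    proof (intro allI impI)
      fix z' :: real assume z': "z' > 0" "poly H' z' = 0"
      have "even (order z' H)" using less.prems(2) z' H' by simp
      moreover have "order z' H = order z' ([:-z,1:]^2) + order z' H'"
        using H' less.prems(1) by (simp add: order_mult)
      moreover have "order z' ([:-z,1:]^2) \<in> {0, 2}"
        using order_power_n_n[of z 2] by (cases "z' = z") (auto intro: order_0I)
      ultimately show "even (order z' H')" by auto
    qed
    ultimately have "(\<forall>x>0. poly H' x \<ge> 0) \<or> (\<forall>x>0. poly H' x \<le> 0)"
      using less.hyps[of H'] \<open>H' \<noteq> 0\<close> by auto
    moreover have "poly H x = (x - z)\<^sup>2 * poly H' x" for x using H' by simp
    ultimately show ?thesis by (auto intro: mult_nonneg_nonneg mult_nonneg_nonpos)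
  qed
qed

lemma order_prod_linear_factors:
  fixes Z :: "real set"
  assumes "finite Z"
  shows "order x (\<Prod>z\<in>Z. [:-z,1:]) = (if x \<in> Z then 1 else 0)"
  using assms
proof (induction Z rule: finite_induct)
  case empty
  show ?case by (simp add: order_0I)
next
  case (insert a F)
  have "[:-a,1:] * (\<Prod>z\<in>F. [:-z,1:]) \<noteq> (0::real poly)" by (simp add: insert(1) del: mult_pCons_left)
  hence "order x (\<Prod>z\<in>insert a F. [:-z,1:]) = order x [:-a,1:] + order x (\<Prod>z\<in>F. [:-z,1:])"
    unfolding prod.insert[OF insert(1,2)] by (rule order_mult)
  moreover have "order x [:-a,1:] = (if x = a then 1 else 0)"
    using order_power_n_n[of a 1] by (auto intro: order_0I)
  ultimately show ?case using insert by auto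
qed

definition root_prod :: "real list \<Rightarrow> real poly" where
  "root_prod zs = prod_list (map (\<lambda>z. [:1, -1/z:]) zs)"

lemma root_prod_Nil [simp]: "root_prod [] = 1"
  by (simp add: root_prod_def)

lemma root_prod_Cons: "root_prod (z # zs) = [:1, -1/z:] * root_prod zs"
  by (simp add: root_prod_def)

lemma poly_root_prod: "poly (root_prod zs) x = (\<Prod>z\<leftarrow>zs. 1 - x / z)"
  by (induction zs) (simp_all add: root_prod_Cons algebra_simps)

lemma poly_root_prod_at_0 [simp]: "poly (root_prod zs) 0 = 1"
  by (induction zs) (simp_all add: root_prod_Cons)

lemma root_prod_nonzero: "root_prod zs \<noteq> 0"
  by (metis poly_0 poly_root_prod_at_0 zero_neq_one)

lemma root_prod_sort: "root_prod (sort zs) = root_prod zs"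
  unfolding root_prod_def prod_mset_prod_list[symmetric] by simp

lemma degree_root_prod: "\<forall>z\<in>set zs. z \<noteq> 0 \<Longrightarrow> degree (root_prod zs) = length zs"
  by (induction zs) (simp_all add: root_prod_Cons degree_mult_eq root_prod_nonzero del: mult_pCons_left)

lemma sign_lead_coeff_root_prod:
  "\<forall>z\<in>set zs. z > 0 \<Longrightarrow> (-1)^length zs * lead_coeff (root_prod zs) > 0"
proof (induction zs)
  case (Cons z zs)
  hence "(-1)^length (z # zs) * lead_coeff (root_prod (z # zs))
      = (1 / z) * ((-1)^length zs * lead_coeff (root_prod zs))"
    by (simp add: root_prod_Cons lead_coeff_mult del: mult_pCons_left)
  thus ?case using Cons by simp
qed simp

lemma pderiv_root_prod_at_0: "poly (pderiv (root_prod zs)) 0 = - (\<Sum>z\<leftarrow>zs. 1 / z)"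
  by (induction zs) (simp_all add: root_prod_Cons pderiv_mult pderiv_pCons del: mult_pCons_left)

lemma abs_pderiv_root_prod_at_0:
  assumes "\<forall>z\<in>set zs. z > 0"
  shows "\<bar>poly (pderiv (root_prod zs)) 0\<bar> = (\<Sum>z\<leftarrow>zs. 1 / z)"
proof -
  have "(\<Sum>z\<leftarrow>zs. 1 / z) \<ge> 0" using assms by (intro sum_list_nonneg) auto
  thus ?thesis by (simp add: pderiv_root_prod_at_0)
qed

lemma root_prod_dvd:
  assumes "distinct zs" "\<forall>z\<in>set zs. z \<noteq> 0 \<and> poly P z = 0"
  shows "root_prod zs dvd P"
  using assms
proof (induction zs)
  case (Cons z zs)
  then obtain L where L: "P = root_prod zs * L" by (auto elim: dvdE)
  have "poly (root_prod zs) z \<noteq> 0"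
    using Cons.prems by (auto simp: poly_root_prod prod_list_zero_iff)
  moreover have "poly P z = 0" using Cons.prems by simp
  ultimately have "[:-z, 1:] dvd L" using L by (simp add: poly_eq_0_iff_dvd)
  hence "smult (- 1 / z) [:-z, 1:] dvd L" using Cons.prems by (subst smult_dvd_iff) simp
  moreover have "smult (- 1 / z) [:-z, 1:] = [:1, -1/z:]" using Cons.prems by simp
  ultimately have "[:1, -1/z:] dvd L" by metis
  hence "[:1, -1/z:] * root_prod zs dvd root_prod zs * L" by (metis mult.commute mult_dvd_mono dvd_refl)
  thus ?case unfolding root_prod_Cons L .
qed simp

lemma factor_as_root_prod:
  fixes P :: "real poly"
  assumes deg: "degree P = Suc r" and at_0: "poly P 0 = 1"
    and roots: "r \<le> card {z. z > 0 \<and> poly P z = 0}"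
    and lead: "(-1)^Suc r * lead_coeff P > 0"
  shows "\<exists>zs. length zs = Suc r \<and> (\<forall>z\<in>set zs. z > 0) \<and> P = root_prod zs"
proof -
  have "P \<noteq> 0" using at_0 by auto
  have "finite {z. z > 0 \<and> poly P z = 0}"
    using poly_roots_finite[OF \<open>P \<noteq> 0\<close>] by (rule finite_subset[rotated]) auto
  then obtain Z where Z: "Z \<subseteq> {z. z > 0 \<and> poly P z = 0}" "card Z = r" "finite Z"
    using obtain_subset_with_card_n[OF roots] by (metis rev_finite_subset)
  define zs where "zs = sorted_list_of_set Z"
  have zs: "distinct zs" "length zs = r" "\<forall>z\<in>set zs. z > 0 \<and> poly P z = 0"
    using Z by (auto simp: zs_def)
  then obtain L where L: "P = root_prod zs * L"
    using root_prod_dvd[of zs P] by (auto elim: dvdE)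
  have "L \<noteq> 0" using L \<open>P \<noteq> 0\<close> by auto
  moreover have "degree (root_prod zs) = r" using degree_root_prod[of zs] zs by auto
  ultimately have "degree L = 1"
    using deg L by (simp add: degree_mult_eq root_prod_nonzero del: mult_pCons_left)
  then obtain a b where "L = [:b, a:]" "a \<noteq> 0" by (elim degree1_coeffs)
  moreover have "poly L 0 = 1" using at_0 L by simp
  ultimately have L_eq: "L = [:1, a:]" by simp
  have "lead_coeff P = lead_coeff (root_prod zs) * lead_coeff L"
    unfolding L by (rule lead_coeff_mult)
  hence "(-1)^Suc r * lead_coeff P = - ((-1)^r * lead_coeff (root_prod zs) * a)"
    using L_eq \<open>a \<noteq> 0\<close> by simp
  hence "(-1)^r * lead_coeff (root_prod zs) * a < ((-1)^r * lead_coeff (root_prod zs)) * 0"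
    using lead by simp
  moreover have "(-1)^r * lead_coeff (root_prod zs) > 0"
    using sign_lead_coeff_root_prod[of zs] zs by simp
  ultimately have "a < 0" by (metis mult_less_cancel_left_pos)
  define z0 where "z0 = - 1 / a"
  have "z0 > 0" "L = [:1, -1/z0:]" using \<open>a < 0\<close> L_eq by (simp_all add: z0_def)
  hence "P = root_prod (z0 # zs)" using L by (simp add: root_prod_Cons mult.commute del: mult_pCons_left)
  thus ?thesis using zs \<open>z0 > 0\<close> by (intro exI[of _ "z0 # zs"]) auto
qed

lemma root_prod_unit_interval:
  assumes "0 \<le> x" "\<forall>z\<in>set zs. z > 0 \<and> x \<le> z"
  shows "0 \<le> poly (root_prod zs) x \<and> poly (root_prod zs) x \<le> 1"
  using assms(2)
proof (induction zs)
  case (Cons z zs)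
  hence "0 \<le> 1 - x / z" "1 - x / z \<le> 1" using assms(1) by auto
  with Cons show ?case by (auto simp: poly_root_prod mult_le_one)
qed simp

lemma root_prod_le_exp:
  assumes "0 \<le> x" "\<forall>z\<in>set zs. z > 0 \<and> x \<le> z"
  shows "poly (root_prod zs) x \<le> exp (- x * (\<Sum>z\<leftarrow>zs. 1 / z))"
  using assms(2)
proof (induction zs)
  case (Cons z zs)
  hence "0 \<le> 1 - x / z" by auto
  moreover have "1 - x / z \<le> exp (- x / z)" using exp_ge_add_one_self[of "- x / z"] by simp
  ultimately have "(1 - x / z) * poly (root_prod zs) x \<le> exp (- x / z) * exp (- x * (\<Sum>z\<leftarrow>zs. 1 / z))"
    using Cons root_prod_unit_interval[OF assms(1), of zs] by (intro mult_mono) auto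
  thus ?case by (simp add: root_prod_Cons exp_add[symmetric] algebra_simps del: mult_pCons_left)
qed simp

lemma root_prod_ge_linear:
  assumes "0 \<le> x" "\<forall>z\<in>set zs. z > 0 \<and> x \<le> z"
  shows "1 - x * (\<Sum>z\<leftarrow>zs. 1 / z) \<le> poly (root_prod zs) x"
  using assms(2)
proof (induction zs)
  case (Cons z zs)
  define s where "s = (\<Sum>z\<leftarrow>zs. 1 / z)"
  have z: "0 \<le> 1 - x / z" "0 \<le> x / z" using Cons.prems assms(1) by auto
  have "0 \<le> s" unfolding s_def using Cons.prems by (intro sum_list_nonneg) auto
  hence "0 \<le> (x / z) * (x * s)" using z(2) assms(1) by (intro mult_nonneg_nonneg) auto
  moreover have "(1 - x / z) * (1 - x * s) = 1 - x * (1 / z + s) + (x / z) * (x * s)"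
    by (simp add: algebra_simps)
  ultimately have "1 - x * (1 / z + s) \<le> (1 - x / z) * (1 - x * s)" by linarith
  also have "\<dots> \<le> (1 - x / z) * poly (root_prod zs) x"
    using Cons z(1) unfolding s_def by (intro mult_left_mono) auto
  finally show ?case unfolding s_def by (simp add: root_prod_Cons del: mult_pCons_left)
qed simp

lemma coordinate_error_bound:
  fixes u p a Y E :: real
  assumes u: "u > 0" and a: "a \<ge> u"
    and below_root: "u < 1 \<Longrightarrow> 0 \<le> p \<and> p \<le> 1 \<and> (1 - u) * p \<le> exp (- a) \<and> 1 - a \<le> (1 - u) * p"
  shows "(E - (1 - u) * p * Y)\<^sup>2 + 2 * u * p * ((1 - u) * p) * Y\<^sup>2
    \<le> 2 * exp (- a) * (Y - E)\<^sup>2 + 2 * min a 1 * E\<^sup>2"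
proof (cases "u < 1")
  case False
  have "(E - (1 - u) * p * Y)\<^sup>2 + 2 * u * p * ((1 - u) * p) * Y\<^sup>2
      = 2 * E\<^sup>2 + 2 * ((1 - u) * (p * Y)\<^sup>2) - (E + (1 - u) * p * Y)\<^sup>2"
    by (simp add: power2_eq_square algebra_simps)
  also have "\<dots> \<le> 2 * E\<^sup>2"
  proof -
    have "(1 - u) * (p * Y)\<^sup>2 \<le> 0" using False by (intro mult_nonpos_nonneg) auto
    thus ?thesis using zero_le_power2[of "E + (1 - u) * p * Y"] by linarith
  qed
  also have "\<dots> \<le> 2 * exp (- a) * (Y - E)\<^sup>2 + 2 * min a 1 * E\<^sup>2"
    using False a by simp
  finally show ?thesis .
next
  case True
  define r where "r = (1 - u) * p"
  have p: "0 \<le> p" "p \<le> 1" and r: "r \<le> exp (- a)" "1 - a \<le> r"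
    using below_root[OF True] unfolding r_def by auto
  have "0 \<le> r" using p True unfolding r_def by simp
  have "u * p \<le> 1 - r" using p unfolding r_def by (simp add: algebra_simps)
  hence "2 * u * p * r * Y\<^sup>2 \<le> 2 * (1 - r) * r * Y\<^sup>2"
    using \<open>0 \<le> r\<close> by (intro mult_right_mono) (auto simp: mult_ac)
  hence "(E - r * Y)\<^sup>2 + 2 * u * p * r * Y\<^sup>2
      \<le> 2 * r * (Y - E)\<^sup>2 + 2 * (1 - r) * E\<^sup>2 - (r * (Y - E) - (1 - r) * E)\<^sup>2"
    by (simp add: power2_eq_square algebra_simps)
  also have "\<dots> \<le> 2 * exp (- a) * (Y - E)\<^sup>2 + 2 * min a 1 * E\<^sup>2"
  proof -
    have "r * (Y - E)\<^sup>2 \<le> exp (- a) * (Y - E)\<^sup>2" using r by (intro mult_right_mono) auto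
    moreover have "(1 - r) * E\<^sup>2 \<le> min a 1 * E\<^sup>2" using r \<open>0 \<le> r\<close> by (intro mult_right_mono) auto
    ultimately show ?thesis using zero_le_power2[of "r * (Y - E) - (1 - r) * E"] by linarith
  qed
  finally show ?thesis unfolding r_def by (simp add: mult_ac)
qed

text \<open>With \<open>R = root_prod (x1 # zs)\<close> and \<open>\<phi> = root_prod zs\<close>, the second term on the left summed
  over the nodes is \<open>2/x1\<close> times the weighted inner product of \<open>R\<close> and \<open>x \<phi>\<close>, which is
  nonnegative for the interpolated CG residual.\<close>
lemma root_prod_coordinate_bound:
  fixes x1 \<mu> Y E :: real
  assumes x1: "x1 > 0" and \<mu>: "\<mu> > 0" and roots: "\<forall>z\<in>set zs. z > 0 \<and> x1 \<le> z"
  defines "\<rho> \<equiv> (\<Sum>z\<leftarrow>x1 # zs. 1 / z)"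
  shows "(E - poly (root_prod (x1 # zs)) \<mu> * Y)\<^sup>2
      + 2 * (\<mu> / x1) * poly (root_prod zs) \<mu> * poly (root_prod (x1 # zs)) \<mu> * Y\<^sup>2
    \<le> 2 * exp (- (\<rho> * \<mu>)) * (Y - E)\<^sup>2 + 2 * min (\<rho> * \<mu>) 1 * E\<^sup>2"
proof -
  have "(\<Sum>z\<leftarrow>zs. 1 / z) \<ge> 0" using roots by (intro sum_list_nonneg) auto
  hence "\<rho> \<ge> 1 / x1" by (simp add: \<rho>_def)
  have poly_x1: "poly (root_prod (x1 # zs)) \<mu> = (1 - \<mu> / x1) * poly (root_prod zs) \<mu>"
    by (simp add: root_prod_Cons algebra_simps)
  show ?thesis unfolding poly_x1
  proof (rule coordinate_error_bound)
    show "0 < \<mu> / x1" using x1 \<mu> by simp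
    show "\<mu> / x1 \<le> \<rho> * \<mu>"
      using \<open>\<rho> \<ge> 1 / x1\<close> \<mu> x1 by (simp add: divide_simps mult.commute mult_right_mono)
    assume "\<mu> / x1 < 1"
    hence below: "0 \<le> \<mu>" "\<forall>z\<in>set (x1 # zs). z > 0 \<and> \<mu> \<le> z" "\<forall>z\<in>set zs. z > 0 \<and> \<mu> \<le> z"
      using \<mu> x1 roots by (auto simp: divide_simps)
    show "0 \<le> poly (root_prod zs) \<mu> \<and> poly (root_prod zs) \<mu> \<le> 1
      \<and> (1 - \<mu> / x1) * poly (root_prod zs) \<mu> \<le> exp (- (\<rho> * \<mu>))
      \<and> 1 - \<rho> * \<mu> \<le> (1 - \<mu> / x1) * poly (root_prod zs) \<mu>"
      using root_prod_unit_interval[OF below(1,3)] root_prod_le_exp[OF below(1,2)]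
        root_prod_ge_linear[OF below(1,2)]
      unfolding \<rho>_def poly_x1[symmetric] by (simp add: mult.commute)
  qed
qed

section \<open>Conjugate gradient residual polynomials\<close>

definition poly_inner :: "('i::finite \<Rightarrow> real) \<Rightarrow> ('i \<Rightarrow> real) \<Rightarrow> real poly \<Rightarrow> real poly \<Rightarrow> real" where
  "poly_inner w mu P Q = (\<Sum>i\<in>UNIV. w i * (poly P (mu i) * poly Q (mu i)))"

lemma poly_inner_commute: "poly_inner w mu P Q = poly_inner w mu Q P"
  unfolding poly_inner_def by (simp add: mult.commute)

lemma poly_inner_add_left: "poly_inner w mu (P1 + P2) Q = poly_inner w mu P1 Q + poly_inner w mu P2 Q"
  unfolding poly_inner_def by (simp add: algebra_simps sum.distrib)

lemma poly_inner_add_right: "poly_inner w mu P (Q1 + Q2) = poly_inner w mu P Q1 + poly_inner w mu P Q2"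
  unfolding poly_inner_def by (simp add: algebra_simps sum.distrib)

lemma poly_inner_diff_right: "poly_inner w mu P (Q1 - Q2) = poly_inner w mu P Q1 - poly_inner w mu P Q2"
  unfolding poly_inner_def by (simp add: algebra_simps sum_subtractf)

lemma poly_inner_smult_left: "poly_inner w mu (smult c P) Q = c * poly_inner w mu P Q"
  unfolding poly_inner_def by (simp add: algebra_simps sum_distrib_left)

lemma poly_inner_smult_right: "poly_inner w mu P (smult c Q) = c * poly_inner w mu P Q"
  unfolding poly_inner_def by (simp add: algebra_simps sum_distrib_left)

lemma poly_inner_expand:
  "poly_inner w mu (P + smult e Q) (P + smult e Q)
     = poly_inner w mu P P + 2 * e * poly_inner w mu P Q + e\<^sup>2 * poly_inner w mu Q Q"
  by (simp add: poly_inner_add_left poly_inner_add_right poly_inner_smult_left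
      poly_inner_smult_right poly_inner_commute[of w mu Q P] power2_eq_square algebra_simps)

lemma linear_coeff_eq_0_if_quadratic_nonneg:
  fixes a b :: real
  assumes "b \<ge> 0" and "\<And>e. 0 \<le> 2 * e * a + e\<^sup>2 * b"
  shows "a = 0"
proof -
  have "0 \<le> 2 * (- a / (b + 1)) * a + (- a / (b + 1))\<^sup>2 * b" by (rule assms(2))
  also have "\<dots> = - a\<^sup>2 * (b + 2) / (b + 1)\<^sup>2"
    using assms(1) by (simp add: divide_simps power2_eq_square) (simp add: algebra_simps)
  finally have "0 \<le> - a\<^sup>2 * (b + 2) / (b + 1)\<^sup>2" .
  moreover have "(b + 1)\<^sup>2 > 0" using assms(1) by simp
  ultimately have "a\<^sup>2 * (b + 2) \<le> 0" by (simp add: zero_le_divide_iff divide_le_0_iff)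
  thus ?thesis using assms(1) by (simp add: mult_le_0_iff)
qed

definition residual_poly :: "nat \<Rightarrow> real poly \<Rightarrow> bool" where
  "residual_poly K P \<longleftrightarrow> degree P \<le> K \<and> poly P 0 = 1"

text \<open>The minimiser is unique only when \<open>K\<close> is at most the number of distinct nodes; for
  larger \<open>K\<close> the definite description yields an unspecified polynomial.\<close>
definition cg_residual :: "('i::finite \<Rightarrow> real) \<Rightarrow> ('i \<Rightarrow> real) \<Rightarrow> nat \<Rightarrow> real poly" where
  "cg_residual w mu K = (THE P. residual_poly K P \<and>
      (\<forall>Q. residual_poly K Q \<longrightarrow> poly_inner w mu P P \<le> poly_inner w mu Q Q))"

definition cg_residual_interp :: "('i::finite \<Rightarrow> real) \<Rightarrow> ('i \<Rightarrow> real) \<Rightarrow> real \<Rightarrow> real poly" where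
  "cg_residual_interp w mu t =
     (if t \<le> 0 then cg_residual w mu 0
      else (let k = nat (\<lceil>t\<rceil> - 1); \<alpha> = t - real k in
            smult (1 - \<alpha>) (cg_residual w mu k) + smult \<alpha> (cg_residual w mu (Suc k))))"

lemma interp_index_bounds:
  fixes t :: real
  assumes "0 < t"
  shows "0 < t - real (nat (\<lceil>t\<rceil> - 1))" and "t - real (nat (\<lceil>t\<rceil> - 1)) \<le> 1"
    and "t \<le> real M \<Longrightarrow> Suc (nat (\<lceil>t\<rceil> - 1)) \<le> M"
proof -
  have "\<lceil>t\<rceil> \<ge> 1" using assms by simp
  hence k: "real (nat (\<lceil>t\<rceil> - 1)) = real_of_int \<lceil>t\<rceil> - 1" by simp
  show "0 < t - real (nat (\<lceil>t\<rceil> - 1))" "t - real (nat (\<lceil>t\<rceil> - 1)) \<le> 1"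
    unfolding k using ceiling_correct[of t] by linarith+
  show "Suc (nat (\<lceil>t\<rceil> - 1)) \<le> M" if "t \<le> real M"
    using that \<open>\<lceil>t\<rceil> \<ge> 1\<close> by (simp add: ceiling_le_iff) linarith
qed

locale cg_weights =
  fixes w mu :: "'i::finite \<Rightarrow> real"
  assumes nodes_pos: "\<And>i. mu i > 0" and weights_nonneg: "\<And>i. w i \<ge> 0"
    and node_weighted: "\<And>i. \<exists>j. mu j = mu i \<and> w j > 0"
begin

abbreviation "num_nodes \<equiv> card (range mu)"

abbreviation "ip \<equiv> poly_inner w mu"

abbreviation "R \<equiv> cg_residual w mu"

lemma ip_self_nonneg: "ip P P \<ge> 0"
  unfolding poly_inner_def by (intro sum_nonneg) (simp add: weights_nonneg)

lemma vanishes_at_nodes_if_weighted_sum_eq_0: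
  assumes "\<And>x. x > 0 \<Longrightarrow> g x \<ge> 0" and "(\<Sum>i\<in>UNIV. w i * g (mu i)) = 0"
  shows "g (mu i) = 0"
proof -
  obtain j where j: "mu j = mu i" "w j > 0" using node_weighted by blast
  have "\<forall>k\<in>UNIV. w k * g (mu k) = 0"
    using assms nodes_pos weights_nonneg by (subst sum_nonneg_eq_0_iff[symmetric]) auto
  hence "w j = 0 \<or> g (mu j) = 0" by simp
  with j show ?thesis by simp
qed

lemma poly_at_node_eq_0_if_ip_self_eq_0:
  assumes "ip P P = 0" shows "poly P (mu i) = 0"
proof -
  have "(poly P (mu i))\<^sup>2 = 0"
    using assms unfolding poly_inner_def
    by (intro vanishes_at_nodes_if_weighted_sum_eq_0[where g = "\<lambda>x. (poly P x)\<^sup>2"])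
      (simp_all add: power2_eq_square)
  thus ?thesis by simp
qed

lemma card_nodes_le_card_roots:
  assumes "P \<noteq> 0" and "\<And>i. poly P (mu i) = 0"
  shows "num_nodes \<le> card {x. x > 0 \<and> poly P x = 0}"
proof (rule card_mono)
  show "finite {x. x > 0 \<and> poly P x = 0}"
    using poly_roots_finite[OF assms(1)] by (rule finite_subset[rotated]) auto
  show "range mu \<subseteq> {x. x > 0 \<and> poly P x = 0}" using assms(2) nodes_pos by auto
qed

lemma poly_eq_0_if_roots_at_nodes_and_0:
  assumes "\<And>i. poly P (mu i) = 0" and "poly P 0 = 0" and "degree P \<le> num_nodes"
  shows "P = 0"
proof (rule ccontr)
  assume "P \<noteq> 0"
  have "insert 0 {x. x > 0 \<and> poly P x = 0} \<subseteq> {x. poly P x = 0}" using assms(2) by auto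
  hence "card (insert 0 {x. x > 0 \<and> poly P x = 0}) \<le> card {x. poly P x = 0}"
    by (rule card_mono[OF poly_roots_finite[OF \<open>P \<noteq> 0\<close>]])
  also have "\<dots> \<le> degree P" by (rule card_poly_roots_bound[OF \<open>P \<noteq> 0\<close>])
  finally have "card (insert 0 {x. x > 0 \<and> poly P x = 0}) \<le> degree P" .
  moreover have "finite {x. x > 0 \<and> poly P x = 0}"
    using poly_roots_finite[OF \<open>P \<noteq> 0\<close>] by (rule finite_subset[rotated]) auto
  ultimately have "Suc num_nodes \<le> degree P"
    using card_nodes_le_card_roots[OF \<open>P \<noteq> 0\<close> assms(1)] by simp
  thus False using assms(3) by simp
qed

definition node_vec :: "real poly \<Rightarrow> real^'i" where
  "node_vec P = (\<chi> i. sqrt (w i) * poly P (mu i))"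

lemma node_vec_add: "node_vec (P + Q) = node_vec P + node_vec Q"
  unfolding node_vec_def by (simp add: vec_eq_iff algebra_simps)

lemma node_vec_smult: "node_vec (smult c P) = c *\<^sub>R node_vec P"
  unfolding node_vec_def by (simp add: vec_eq_iff algebra_simps)

lemma norm_node_vec: "(norm (node_vec P))\<^sup>2 = ip P P"
proof -
  have "(norm (node_vec P))\<^sup>2 = (\<Sum>i\<in>UNIV. (sqrt (w i) * poly P (mu i))\<^sup>2)"
    unfolding node_vec_def norm_vec_def L2_set_def by (simp add: sum_nonneg)
  also have "\<dots> = ip P P" unfolding poly_inner_def
    by (rule sum.cong) (auto simp: power_mult_distrib weights_nonneg power2_eq_square)
  finally show ?thesis .
qed

lemma subspace_node_vec_vanishing_at_0: "subspace (node_vec ` {P. degree P \<le> K \<and> poly P 0 = 0})"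
  unfolding subspace_def
proof (intro conjI ballI allI)
  show "0 \<in> node_vec ` {P. degree P \<le> K \<and> poly P 0 = 0}"
    by (rule image_eqI[of _ _ 0]) (auto simp: node_vec_def vec_eq_iff)
next
  fix x y
  assume "x \<in> node_vec ` {P. degree P \<le> K \<and> poly P 0 = 0}"
    and "y \<in> node_vec ` {P. degree P \<le> K \<and> poly P 0 = 0}"
  then obtain P Q where "x = node_vec P" "y = node_vec Q"
    "degree P \<le> K" "poly P 0 = 0" "degree Q \<le> K" "poly Q 0 = 0"
    by auto
  thus "x + y \<in> node_vec ` {P. degree P \<le> K \<and> poly P 0 = 0}"
    by (intro image_eqI[of _ _ "P + Q"]) (auto simp: node_vec_add intro: degree_add_le)
next
  fix c x assume "x \<in> node_vec ` {P. degree P \<le> K \<and> poly P 0 = 0}"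
  then obtain P where "x = node_vec P" "degree P \<le> K" "poly P 0 = 0" by auto
  thus "c *\<^sub>R x \<in> node_vec ` {P. degree P \<le> K \<and> poly P 0 = 0}"
    by (intro image_eqI[of _ _ "smult c P"]) (auto simp: node_vec_smult)
qed

lemma closed_node_vec_residuals: "closed (node_vec ` {P. residual_poly K P})"
proof -
  define V where "V = node_vec ` {P. degree P \<le> K \<and> poly P 0 = 0}"
  have "node_vec ` {P. residual_poly K P} = (\<lambda>x. node_vec 1 + x) ` V"
  proof (intro equalityI subsetI)
    fix x assume "x \<in> node_vec ` {P. residual_poly K P}"
    then obtain P where "x = node_vec P" "residual_poly K P" by auto
    hence "x = node_vec 1 + node_vec (P - 1)" "degree (P - 1) \<le> K" "poly (P - 1) 0 = 0"
      using node_vec_add[of 1 "P - 1"] by (auto simp: residual_poly_def intro: degree_diff_le)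
    thus "x \<in> (\<lambda>x. node_vec 1 + x) ` V" unfolding V_def by auto
  next
    fix x assume "x \<in> (\<lambda>x. node_vec 1 + x) ` V"
    then obtain P where "x = node_vec 1 + node_vec P" "degree P \<le> K" "poly P 0 = 0"
      unfolding V_def by auto
    thus "x \<in> node_vec ` {P. residual_poly K P}"
      by (intro image_eqI[of _ _ "1 + P"])
        (auto simp: node_vec_add residual_poly_def intro: degree_add_le)
  qed
  thus ?thesis
    using subspace_node_vec_vanishing_at_0 by (simp add: V_def closed_translation closed_subspace)
qed

lemma residual_minimiser_exists:
  "\<exists>P. residual_poly K P \<and> (\<forall>Q. residual_poly K Q \<longrightarrow> ip P P \<le> ip Q Q)"
proof -
  have "node_vec 1 \<in> node_vec ` {P. residual_poly K P}"
    by (rule imageI) (simp add: residual_poly_def)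
  then obtain x where x: "x \<in> node_vec ` {P. residual_poly K P}"
    "\<And>y. y \<in> node_vec ` {P. residual_poly K P} \<Longrightarrow> dist 0 x \<le> dist 0 y"
    using distance_attains_inf[OF closed_node_vec_residuals] by blast
  then obtain P where P: "x = node_vec P" "residual_poly K P" by auto
  have "ip P P \<le> ip Q Q" if "residual_poly K Q" for Q
  proof -
    have "norm (node_vec P) \<le> norm (node_vec Q)" using x(2)[of "node_vec Q"] P that by auto
    hence "(norm (node_vec P))\<^sup>2 \<le> (norm (node_vec Q))\<^sup>2" by (simp add: power_mono)
    thus ?thesis by (simp add: norm_node_vec)
  qed
  with P show ?thesis by blast
qed

text \<open>Strict convexity: the midpoint of two minimisers is no better, which forces
  \<open>ip (P1 - P2) (P1 - P2) = 0\<close>.\<close>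

lemma residual_minimiser_unique:
  assumes "K \<le> num_nodes" "residual_poly K P1" "residual_poly K P2"
    "\<forall>Q. residual_poly K Q \<longrightarrow> ip P1 P1 \<le> ip Q Q"
    "\<forall>Q. residual_poly K Q \<longrightarrow> ip P2 P2 \<le> ip Q Q"
  shows "P1 = P2"
proof -
  define P where "P = smult (1/2) (P1 + P2)"
  have "residual_poly K P" using assms(2,3) unfolding P_def residual_poly_def
    by (auto intro: order.trans[OF degree_add_le])
  hence le: "ip P1 P1 \<le> ip P P" using assms(4) by blast
  have eq: "ip P1 P1 = ip P2 P2" using assms by (meson order_antisym)
  have "ip P P = (\<Sum>i\<in>UNIV. (w i * (poly P1 (mu i) * poly P1 (mu i))
      + w i * (poly P2 (mu i) * poly P2 (mu i))) / 2
      - w i * (poly (P1 - P2) (mu i) * poly (P1 - P2) (mu i)) / 4)"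
    unfolding P_def poly_inner_def by (rule sum.cong) (auto simp: field_simps)
  also have "\<dots> = (ip P1 P1 + ip P2 P2) / 2 - ip (P1 - P2) (P1 - P2) / 4"
    unfolding poly_inner_def
    by (simp add: sum_divide_distrib[symmetric] sum_subtractf sum.distrib)
  finally have "ip P P = (ip P1 P1 + ip P2 P2) / 2 - ip (P1 - P2) (P1 - P2) / 4" .
  hence "ip P P = ip P1 P1 - ip (P1 - P2) (P1 - P2) / 4" using eq by simp
  hence "ip (P1 - P2) (P1 - P2) \<le> 0" using le by linarith
  hence "ip (P1 - P2) (P1 - P2) = 0" using ip_self_nonneg[of "P1 - P2"] by linarith
  hence "P1 - P2 = 0" using assms(1-3)
    by (intro poly_eq_0_if_roots_at_nodes_and_0 poly_at_node_eq_0_if_ip_self_eq_0)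
      (auto simp: residual_poly_def intro: order.trans[OF degree_diff_le])
  thus ?thesis by simp
qed

lemma cg_residual_minimiser:
  assumes "K \<le> num_nodes"
  shows "residual_poly K (R K)" and "\<And>Q. residual_poly K Q \<Longrightarrow> ip (R K) (R K) \<le> ip Q Q"
proof -
  obtain P where P: "residual_poly K P" "\<forall>Q. residual_poly K Q \<longrightarrow> ip P P \<le> ip Q Q"
    using residual_minimiser_exists by blast
  have "R K = P"
    unfolding cg_residual_def
  proof (rule the_equality)
    fix P' assume "residual_poly K P' \<and> (\<forall>Q. residual_poly K Q \<longrightarrow> ip P' P' \<le> ip Q Q)"
    thus "P' = P" using residual_minimiser_unique[OF assms _ P(1) _ P(2)] by blast
  qed (use P in blast)
  thus "residual_poly K (R K)" "\<And>Q. residual_poly K Q \<Longrightarrow> ip (R K) (R K) \<le> ip Q Q"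
    using P by auto
qed

lemma cg_residual_0: "R 0 = 1"
proof -
  have "degree (R 0) = 0" "poly (R 0) 0 = 1"
    using cg_residual_minimiser(1)[of 0] unfolding residual_poly_def by auto
  thus ?thesis by (metis degree_0_id poly_0_coeff_0 one_pCons)
qed

lemma cg_residual_orthogonal:
  assumes "K \<le> num_nodes" "degree Q \<le> K" "poly Q 0 = 0"
  shows "ip (R K) Q = 0"
proof (rule linear_coeff_eq_0_if_quadratic_nonneg[OF ip_self_nonneg])
  fix e
  have "residual_poly K (R K + smult e Q)"
    using cg_residual_minimiser(1)[OF assms(1)] assms(2,3) unfolding residual_poly_def
    by (auto intro: order.trans[OF degree_add_le])
  hence "ip (R K) (R K) \<le> ip (R K + smult e Q) (R K + smult e Q)"
    using cg_residual_minimiser(2)[OF assms(1)] by blast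
  thus "0 \<le> 2 * e * ip (R K) Q + e\<^sup>2 * ip Q Q" unfolding poly_inner_expand by linarith
qed

definition cg_lead :: "nat \<Rightarrow> real" where
  "cg_lead K = coeff (R K) K"

definition cg_moment :: "nat \<Rightarrow> real" where
  "cg_moment K = ip (R K) (monom 1 (Suc K))"

lemma ip_cg_residual_vanishing_at_0:
  assumes "K \<le> num_nodes" "degree Q \<le> Suc K" "poly Q 0 = 0"
  shows "ip (R K) Q = coeff Q (Suc K) * cg_moment K"
proof -
  define Q' where "Q' = Q - smult (coeff Q (Suc K)) (monom 1 (Suc K))"
  have "degree Q' \<le> K"
  proof (rule degree_le, intro allI impI)
    fix i assume "K < i"
    thus "coeff Q' i = 0"
      using assms(2) by (cases "i = Suc K") (auto simp: Q'_def coeff_monom intro: coeff_eq_0)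
  qed
  moreover have "poly Q' 0 = 0" using assms(3) by (simp add: Q'_def poly_monom)
  ultimately have "ip (R K) Q' = 0" by (rule cg_residual_orthogonal[OF assms(1)])
  thus ?thesis by (simp add: Q'_def cg_moment_def poly_inner_diff_right poly_inner_smult_right)
qed

lemma cg_lead_mult_moment_pos:
  assumes "K < num_nodes"
  shows "cg_lead K * cg_moment K > 0"
proof -
  have "degree (R K) \<le> K" "R K \<noteq> 0"
    using cg_residual_minimiser(1)[of K] assms unfolding residual_poly_def by auto
  have "degree (pCons 0 (R K)) \<le> Suc K"
    using \<open>degree (R K) \<le> K\<close> by (intro order.trans[OF degree_pCons_le]) simp
  hence "ip (R K) (pCons 0 (R K)) = cg_lead K * cg_moment K"
    using ip_cg_residual_vanishing_at_0[of K "pCons 0 (R K)"] assms by (simp add: cg_lead_def)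
  moreover have weighted_sum: "ip (R K) (pCons 0 (R K)) = (\<Sum>i\<in>UNIV. w i * (mu i * (poly (R K) (mu i))\<^sup>2))"
    unfolding poly_inner_def by (rule sum.cong) (simp_all add: power2_eq_square)
  moreover have "ip (R K) (pCons 0 (R K)) \<noteq> 0"
  proof
    assume "ip (R K) (pCons 0 (R K)) = 0"
    hence zero: "mu i * (poly (R K) (mu i))\<^sup>2 = 0" for i
      using weighted_sum
      by (intro vanishes_at_nodes_if_weighted_sum_eq_0[where g = "\<lambda>x. x * (poly (R K) x)\<^sup>2"]) auto
    have "poly (R K) (mu i) = 0" for i using zero[of i] nodes_pos[of i] by simp
    hence "num_nodes \<le> card {x. x > 0 \<and> poly (R K) x = 0}"
      by (rule card_nodes_le_card_roots[OF \<open>R K \<noteq> 0\<close>])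
    also have "\<dots> \<le> card {x. poly (R K) x = 0}"
      by (rule card_mono[OF poly_roots_finite[OF \<open>R K \<noteq> 0\<close>]]) auto
    also have "\<dots> \<le> degree (R K)" by (rule card_poly_roots_bound[OF \<open>R K \<noteq> 0\<close>])
    finally show False using \<open>degree (R K) \<le> K\<close> assms by simp
  qed
  moreover have "(\<Sum>i\<in>UNIV. w i * (mu i * (poly (R K) (mu i))\<^sup>2)) \<ge> 0"
    using weights_nonneg nodes_pos by (intro sum_nonneg) (simp add: less_imp_le)
  ultimately show ?thesis by linarith
qed

lemma cg_residual_norm_diff:
  assumes "Suc K \<le> num_nodes"
  shows "ip (R K) (R K) - ip (R (Suc K)) (R (Suc K)) = - cg_lead (Suc K) * cg_moment K"
proof -
  have A: "residual_poly K (R K)" and B: "residual_poly (Suc K) (R (Suc K))"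
    using cg_residual_minimiser(1) assms by auto
  hence deg: "degree (R K - R (Suc K)) \<le> Suc K" and at0: "poly (R K - R (Suc K)) 0 = 0"
    unfolding residual_poly_def by (auto intro: degree_diff_le)
  have "coeff (R K) (Suc K) = 0" using A unfolding residual_poly_def by (intro coeff_eq_0) auto
  hence "ip (R K) (R K - R (Suc K)) = - cg_lead (Suc K) * cg_moment K"
    using ip_cg_residual_vanishing_at_0[OF _ deg at0] assms by (simp add: cg_lead_def)
  moreover have "ip (R (Suc K)) (R K - R (Suc K)) = 0"
    by (rule cg_residual_orthogonal[OF assms deg at0])
  ultimately show ?thesis
    by (simp add: poly_inner_diff_right poly_inner_commute[of w mu "R K" "R (Suc K)"])
qed

lemma cg_residual_norm_strict_decrease:
  assumes "Suc K \<le> num_nodes"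
  shows "ip (R (Suc K)) (R (Suc K)) < ip (R K) (R K)"
proof (rule ccontr)
  assume no_decrease: "\<not> ip (R (Suc K)) (R (Suc K)) < ip (R K) (R K)"
  have "0 \<le> 2 * e * cg_moment K + e\<^sup>2 * ip (monom 1 (Suc K)) (monom 1 (Suc K))" for e
  proof -
    have "residual_poly (Suc K) (R K + smult e (monom 1 (Suc K)))"
      using cg_residual_minimiser(1)[of K] assms unfolding residual_poly_def
      by (auto simp: poly_monom degree_monom_eq intro!: degree_add_le)
    hence "ip (R (Suc K)) (R (Suc K))
        \<le> ip (R K + smult e (monom 1 (Suc K))) (R K + smult e (monom 1 (Suc K)))"
      using cg_residual_minimiser(2)[OF assms] by blast
    with no_decrease show ?thesis unfolding poly_inner_expand cg_moment_def by linarith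
  qed
  hence "cg_moment K = 0" by (rule linear_coeff_eq_0_if_quadratic_nonneg[OF ip_self_nonneg])
  thus False using cg_lead_mult_moment_pos[of K] assms by simp
qed

lemma cg_lead_sign: "K \<le> num_nodes \<Longrightarrow> (-1)^K * cg_lead K > 0"
proof (induction K)
  case 0
  show ?case by (simp add: cg_lead_def cg_residual_0)
next
  case (Suc K)
  have "cg_lead K * cg_moment K > 0" using cg_lead_mult_moment_pos Suc.prems by simp
  moreover have "cg_lead (Suc K) * cg_moment K < 0"
    using cg_residual_norm_diff[OF Suc.prems] cg_residual_norm_strict_decrease[OF Suc.prems] by simp
  ultimately have "(cg_lead K * cg_moment K) * (cg_lead (Suc K) * cg_moment K) < 0"
    by (rule mult_pos_neg)
  hence "(cg_lead K * cg_lead (Suc K)) * (cg_moment K)\<^sup>2 < 0"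
    by (simp add: power2_eq_square mult_ac)
  hence "cg_lead K * cg_lead (Suc K) < 0" by (simp add: mult_less_0_iff)
  moreover have "(-1::real)^K * (-1)^K = 1" by (simp flip: power_add)
  hence "((-1)^K * cg_lead K) * ((-1)^Suc K * cg_lead (Suc K)) = - (cg_lead K * cg_lead (Suc K))"
    by (simp add: algebra_simps)
  ultimately have "((-1)^K * cg_lead K) * ((-1)^Suc K * cg_lead (Suc K)) > 0" by linarith
  moreover have "(-1)^K * cg_lead K > 0" using Suc by simp
  ultimately show ?case by (rule zero_less_mult_pos)
qed

lemma vanishes_at_nodes_if_const_sign:
  assumes sign: "(\<forall>x>0. poly H x \<ge> 0) \<or> (\<forall>x>0. poly H x \<le> 0)"
    and sum_0: "(\<Sum>i\<in>UNIV. w i * (mu i * poly H (mu i))) = 0"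
  shows "poly H (mu i) = 0"
  using sign
proof
  assume "\<forall>x>0. poly H x \<ge> 0"
  hence "mu i * poly H (mu i) = 0"
    using sum_0 by (intro vanishes_at_nodes_if_weighted_sum_eq_0[where g = "\<lambda>x. x * poly H x"]) auto
  thus ?thesis using nodes_pos[of i] by simp
next
  assume "\<forall>x>0. poly H x \<le> 0"
  moreover have "(\<Sum>i\<in>UNIV. w i * - (mu i * poly H (mu i))) = 0"
    using sum_0 by (simp add: sum_negf)
  ultimately have "- (mu i * poly H (mu i)) = 0"
    by (intro vanishes_at_nodes_if_weighted_sum_eq_0[where g = "\<lambda>x. - (x * poly H x)"])
      (auto simp: mult_nonneg_nonpos)
  thus ?thesis using nodes_pos[of i] by simp
qed

text \<open>Multiplying \<open>P\<close> by the linear factors of its positive roots of odd order produces a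
  polynomial \<open>H\<close> of constant sign on \<open>(0, \<infinity>)\<close>; if there were fewer than \<open>r\<close> such roots,
  orthogonality would make the weighted sum of \<open>x H(x)\<close> over the nodes vanish.\<close>

lemma card_pos_roots_ge_if_orthogonal:
  fixes P :: "real poly"
  assumes at_0: "poly P 0 \<noteq> 0" and "r \<le> num_nodes"
    and orthogonal: "\<And>Q. degree Q \<le> r \<Longrightarrow> poly Q 0 = 0 \<Longrightarrow> ip P Q = 0"
  shows "r \<le> card {z. z > 0 \<and> poly P z = 0}"
proof (rule ccontr)
  assume few_roots: "\<not> r \<le> card {z. z > 0 \<and> poly P z = 0}"
  have "P \<noteq> 0" using at_0 by auto
  have fin: "finite {z. z > 0 \<and> poly P z = 0}"
    using poly_roots_finite[OF \<open>P \<noteq> 0\<close>] by (rule finite_subset[rotated]) auto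
  define Z where "Z = {z. z > 0 \<and> odd (order z P)}"
  have Z_roots: "Z \<subseteq> {z. z > 0 \<and> poly P z = 0}"
    unfolding Z_def using order_root[of P] by (auto dest: odd_pos)
  have "finite Z" using finite_subset[OF Z_roots fin] .
  have "card Z < r" using card_mono[OF fin Z_roots] few_roots by simp
  define Q where "Q = (\<Prod>z\<in>Z. [:-z, 1::real:])"
  have "Q \<noteq> 0" unfolding Q_def by (simp add: \<open>finite Z\<close>)
  have "degree Q = card Z" unfolding Q_def by (subst degree_prod_eq_sum_degree) auto
  hence "ip P (pCons 0 Q) = 0" using \<open>card Z < r\<close> \<open>Q \<noteq> 0\<close> by (intro orthogonal) auto
  hence sum_0: "(\<Sum>i\<in>UNIV. w i * (mu i * poly (P * Q) (mu i))) = 0"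
    unfolding poly_inner_def by (simp add: mult_ac)
  have "even (order z (P * Q))" if "z > 0" for z
  proof -
    have "order z (P * Q) = order z P + order z Q"
      by (rule order_mult) (simp add: \<open>P \<noteq> 0\<close> \<open>Q \<noteq> 0\<close>)
    moreover have "order z Q = (if z \<in> Z then 1 else 0)"
      unfolding Q_def by (rule order_prod_linear_factors[OF \<open>finite Z\<close>])
    ultimately show ?thesis using that by (simp add: Z_def)
  qed
  hence "(\<forall>x>0. poly (P * Q) x \<ge> 0) \<or> (\<forall>x>0. poly (P * Q) x \<le> 0)"
    using \<open>P \<noteq> 0\<close> \<open>Q \<noteq> 0\<close> by (intro poly_sign_const_on_pos_if_even_roots) simp_all
  hence "poly P (mu i) = 0 \<or> poly Q (mu i) = 0" for i
    using vanishes_at_nodes_if_const_sign[OF _ sum_0] by simp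
  moreover have "poly Q x = 0 \<Longrightarrow> poly P x = 0" for x
    using Z_roots \<open>finite Z\<close> by (auto simp: Q_def poly_prod)
  ultimately have "num_nodes \<le> card {z. z > 0 \<and> poly P z = 0}"
    using card_nodes_le_card_roots[OF \<open>P \<noteq> 0\<close>] by blast
  thus False using few_roots \<open>r \<le> num_nodes\<close> by simp
qed

abbreviation "R_interp \<equiv> cg_residual_interp w mu"

lemma interp_residual_root_prod:
  assumes "Suc k \<le> num_nodes" "0 < \<alpha>" "\<alpha> \<le> 1"
  shows "\<exists>zs. sorted zs \<and> length zs = Suc k \<and> (\<forall>z\<in>set zs. z > 0)
    \<and> smult (1 - \<alpha>) (R k) + smult \<alpha> (R (Suc k)) = root_prod zs"
proof -
  define P where "P = smult (1 - \<alpha>) (R k) + smult \<alpha> (R (Suc k))"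
  have A: "residual_poly k (R k)" and B: "residual_poly (Suc k) (R (Suc k))"
    using cg_residual_minimiser(1) assms(1) by auto
  have "poly P 0 = 1" using A B unfolding P_def residual_poly_def by (simp add: algebra_simps)
  have "coeff (R k) (Suc k) = 0" using A unfolding residual_poly_def by (intro coeff_eq_0) auto
  hence lead: "coeff P (Suc k) = \<alpha> * cg_lead (Suc k)" by (simp add: P_def cg_lead_def)
  have sign: "(-1)^Suc k * cg_lead (Suc k) > 0" using cg_lead_sign[OF assms(1)] .
  have "degree P = Suc k"
  proof (rule antisym)
    show "degree P \<le> Suc k" using A B unfolding P_def residual_poly_def
      by (intro degree_add_le order.trans[OF degree_smult_le]) auto
    show "Suc k \<le> degree P" using lead sign assms(2) by (intro le_degree) auto
  qed
  moreover have "k \<le> card {z. z > 0 \<and> poly P z = 0}"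
  proof (rule card_pos_roots_ge_if_orthogonal)
    fix Q :: "real poly" assume "degree Q \<le> k" "poly Q 0 = 0"
    thus "ip P Q = 0" using assms(1)
      by (simp add: P_def poly_inner_add_left poly_inner_smult_left cg_residual_orthogonal)
  qed (use \<open>poly P 0 = 1\<close> assms(1) in auto)
  moreover have "(-1)^Suc k * lead_coeff P = \<alpha> * ((-1)^Suc k * cg_lead (Suc k))"
    using lead \<open>degree P = Suc k\<close> by (metis mult.left_commute)
  hence "(-1)^Suc k * lead_coeff P > 0" using mult_pos_pos[OF assms(2) sign] by argo
  ultimately obtain zs where "length zs = Suc k" "\<forall>z\<in>set zs. z > 0" "P = root_prod zs"
    using factor_as_root_prod \<open>poly P 0 = 1\<close> by blast
  thus ?thesis unfolding P_def by (intro exI[of _ "sort zs"]) (simp add: root_prod_sort)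
qed

text \<open>\<open>R (Suc k)\<close> is orthogonal to \<open>x \<phi>\<close>, so only \<open>R k\<close> contributes, with the sign of the
  coefficient of \<open>x\<^sup>k\<close> in \<open>\<phi>\<close>; comparing coefficients of \<open>x\<^sup>k\<^sup>+\<^sup>1\<close> in the factorisation ties
  that coefficient to \<open>cg_lead (Suc k)\<close>.\<close>
lemma interp_residual_inner_shift_nonneg:
  assumes "Suc k \<le> num_nodes" "0 < \<alpha>" "\<alpha> \<le> 1" "x1 > 0" "degree \<phi> \<le> k"
    and factor: "smult (1 - \<alpha>) (R k) + smult \<alpha> (R (Suc k)) = [:1, -1/x1:] * \<phi>"
  shows "ip ([:1, -1/x1:] * \<phi>) (pCons 0 \<phi>) \<ge> 0"
proof -
  have shift_deg: "degree (pCons 0 \<phi>) \<le> Suc k"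
    using assms(5) by (intro order.trans[OF degree_pCons_le]) simp
  have "coeff (R k) (Suc k) = 0"
    using cg_residual_minimiser(1)[of k] assms(1) unfolding residual_poly_def by (intro coeff_eq_0) auto
  moreover have "coeff \<phi> (Suc k) = 0" using assms(5) by (intro coeff_eq_0) auto
  ultimately have "\<alpha> * cg_lead (Suc k) = - coeff \<phi> k / x1"
    using arg_cong[OF factor, of "\<lambda>P. coeff P (Suc k)"] by (simp add: cg_lead_def)
  hence coeff_\<phi>: "coeff \<phi> k = - x1 * \<alpha> * cg_lead (Suc k)" using assms(4) by (simp add: field_simps)
  have "ip (R (Suc k)) (pCons 0 \<phi>) = 0"
    using assms(1) shift_deg by (intro cg_residual_orthogonal) auto
  moreover have "ip (R k) (pCons 0 \<phi>) = coeff \<phi> k * cg_moment k"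
    using ip_cg_residual_vanishing_at_0[OF _ shift_deg] assms(1) by simp
  ultimately have "ip ([:1, -1/x1:] * \<phi>) (pCons 0 \<phi>)
      = (1 - \<alpha>) * \<alpha> * x1 * (- cg_lead (Suc k) * cg_moment k)"
    unfolding factor[symmetric] coeff_\<phi> by (simp add: poly_inner_add_left poly_inner_smult_left)
  moreover have "- cg_lead (Suc k) * cg_moment k > 0"
    using cg_residual_norm_diff[OF assms(1)] cg_residual_norm_strict_decrease[OF assms(1)] by simp
  moreover have "(1 - \<alpha>) * \<alpha> * x1 \<ge> 0" using assms(2-4) by simp
  ultimately show ?thesis by (metis mult_nonneg_nonneg less_imp_le)
qed

lemma cg_residual_interp_factor:
  assumes "0 < t" "t \<le> real num_nodes"
  obtains x1 zs where "x1 > 0" "\<forall>z\<in>set zs. x1 \<le> z"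
    "R_interp t = root_prod (x1 # zs)" "ip (R_interp t) (pCons 0 (root_prod zs)) \<ge> 0"
proof -
  define k where "k = nat (\<lceil>t\<rceil> - 1)"
  define \<alpha> where "\<alpha> = t - real k"
  have \<alpha>: "0 < \<alpha>" "\<alpha> \<le> 1" and k: "Suc k \<le> num_nodes"
    using interp_index_bounds[OF assms(1)] assms(2) unfolding k_def \<alpha>_def by auto
  have R_t: "R_interp t = smult (1 - \<alpha>) (R k) + smult \<alpha> (R (Suc k))"
    using assms(1) by (simp add: cg_residual_interp_def Let_def k_def \<alpha>_def)
  obtain zs' where zs': "sorted zs'" "length zs' = Suc k" "\<forall>z\<in>set zs'. z > 0"
    "R_interp t = root_prod zs'"
    using interp_residual_root_prod[OF k \<alpha>] R_t by auto
  then obtain x1 zs where zs: "zs' = x1 # zs" by (cases zs') auto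
  have "x1 > 0" "\<forall>z\<in>set zs. x1 \<le> z" using zs' zs by auto
  moreover have "\<forall>z\<in>set zs. z \<noteq> 0" using zs' zs by auto
  hence "degree (root_prod zs) \<le> k" using zs' zs by (simp add: degree_root_prod)
  ultimately have "ip ([:1, -1/x1:] * root_prod zs) (pCons 0 (root_prod zs)) \<ge> 0"
    using zs' zs R_t by (intro interp_residual_inner_shift_nonneg[OF k \<alpha>]) (auto simp: root_prod_Cons)
  moreover have R_t_eq: "R_interp t = root_prod (x1 # zs)" using zs' zs by simp
  ultimately show ?thesis
    using that[OF \<open>x1 > 0\<close> \<open>\<forall>z\<in>set zs. x1 \<le> z\<close> R_t_eq] unfolding R_t_eq root_prod_Cons by blast
qed

lemma cg_residual_interp_error_bound:
  fixes Y E :: "'i \<Rightarrow> real"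
  assumes w: "\<And>i. w i = (Y i)\<^sup>2" and t: "0 \<le> t" "t \<le> real num_nodes"
  defines "\<rho> \<equiv> \<bar>poly (pderiv (R_interp t)) 0\<bar>"
  shows "(\<Sum>i\<in>UNIV. (E i - poly (R_interp t) (mu i) * Y i)\<^sup>2)
    \<le> 2 * (\<Sum>i\<in>UNIV. exp (- (\<rho> * mu i)) * (Y i - E i)\<^sup>2)
      + 2 * (\<Sum>i\<in>UNIV. min (\<rho> * mu i) 1 * (E i)\<^sup>2)"
proof (cases "t = 0")
  case True
  hence "R_interp t = 1" by (simp add: cg_residual_interp_def cg_residual_0)
  thus ?thesis
    by (simp add: \<rho>_def sum_distrib_left[symmetric] power2_commute[of "E _"] sum_nonneg)
next
  case False
  then obtain x1 zs where x1: "x1 > 0" "\<forall>z\<in>set zs. x1 \<le> z"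
    and R_t: "R_interp t = root_prod (x1 # zs)"
    and inner_nonneg: "ip (R_interp t) (pCons 0 (root_prod zs)) \<ge> 0"
    using cg_residual_interp_factor t by (metis order_le_neq_trans)
  have roots: "\<forall>z\<in>set zs. z > 0 \<and> x1 \<le> z" using x1 by auto
  have "\<rho> = (\<Sum>z\<leftarrow>x1 # zs. 1 / z)"
    unfolding \<rho>_def R_t by (rule abs_pderiv_root_prod_at_0) (use roots x1(1) in auto)
  hence coordinate: "(E i - poly (R_interp t) (mu i) * Y i)\<^sup>2
      + 2 * (mu i / x1) * poly (root_prod zs) (mu i) * poly (R_interp t) (mu i) * (Y i)\<^sup>2
    \<le> 2 * exp (- (\<rho> * mu i)) * (Y i - E i)\<^sup>2 + 2 * min (\<rho> * mu i) 1 * (E i)\<^sup>2" for i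
    unfolding R_t using root_prod_coordinate_bound[OF x1(1) nodes_pos roots] by simp
  have "ip (R_interp t) (pCons 0 (root_prod zs))
      = (\<Sum>i\<in>UNIV. mu i * poly (root_prod zs) (mu i) * poly (R_interp t) (mu i) * (Y i)\<^sup>2)"
    unfolding poly_inner_def w by (simp add: mult_ac)
  hence "(\<Sum>i\<in>UNIV. 2 * (mu i / x1) * poly (root_prod zs) (mu i) * poly (R_interp t) (mu i) * (Y i)\<^sup>2)
      = 2 / x1 * ip (R_interp t) (pCons 0 (root_prod zs))"
    by (simp add: sum_distrib_left mult_ac)
  moreover have "2 / x1 * ip (R_interp t) (pCons 0 (root_prod zs)) \<ge> 0"
    using x1(1) inner_nonneg by simp
  moreover have "(\<Sum>i\<in>UNIV. (E i - poly (R_interp t) (mu i) * Y i)\<^sup>2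
      + 2 * (mu i / x1) * poly (root_prod zs) (mu i) * poly (R_interp t) (mu i) * (Y i)\<^sup>2)
    \<le> (\<Sum>i\<in>UNIV. 2 * exp (- (\<rho> * mu i)) * (Y i - E i)\<^sup>2 + 2 * min (\<rho> * mu i) 1 * (E i)\<^sup>2)"
    by (rule sum_mono) (rule coordinate)
  ultimately show ?thesis
    by (simp add: sum.distrib sum_distrib_left mult.assoc)
qed

end

section \<open>Spectral calculus for symmetric matrices\<close>

lemma sum_outer_mult_vec:
  fixes v :: "'n::finite \<Rightarrow> real^'n"
  shows "(\<Sum>i\<in>UNIV. c i *\<^sub>R outer (v i)) *v z = (\<Sum>i\<in>UNIV. (c i * (v i \<bullet> z)) *\<^sub>R v i)"
proof -
  have "(\<Sum>b\<in>UNIV. (\<Sum>i\<in>UNIV. c i * (v i $ a * v i $ b)) * z $ b)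
      = (\<Sum>i\<in>UNIV. c i * (\<Sum>b\<in>UNIV. v i $ b * z $ b) * v i $ a)" for a
  proof -
    have "(\<Sum>b\<in>UNIV. (\<Sum>i\<in>UNIV. c i * (v i $ a * v i $ b)) * z $ b)
        = (\<Sum>b\<in>UNIV. \<Sum>i\<in>UNIV. c i * (v i $ a * v i $ b) * z $ b)"
      by (simp add: sum_distrib_right)
    also have "\<dots> = (\<Sum>i\<in>UNIV. \<Sum>b\<in>UNIV. c i * (v i $ a * v i $ b) * z $ b)"
      by (rule sum.swap)
    also have "\<dots> = (\<Sum>i\<in>UNIV. c i * (\<Sum>b\<in>UNIV. v i $ b * z $ b) * v i $ a)"
      by (rule sum.cong) (simp_all add: sum_distrib_left sum_distrib_right mult_ac)
    finally show ?thesis .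
  qed
  thus ?thesis by (simp add: vec_eq_iff matrix_vector_mult_def outer_def inner_vec_def)
qed

locale orthonormal_basis =
  fixes v :: "'n::finite \<Rightarrow> real^'n"
  assumes orthonormal: "\<forall>i j. v i \<bullet> v j = (if i = j then 1 else 0)"
begin

lemma expansion: "z = (\<Sum>i\<in>UNIV. (v i \<bullet> z) *\<^sub>R v i)"
proof -
  define V :: "real^'n^'n" where "V = (\<chi> a b. v b $ a)"
  have "transpose V ** V = mat 1"
    using orthonormal
    by (simp add: vec_eq_iff matrix_matrix_mult_def transpose_def V_def mat_def inner_vec_def)
  hence "V ** transpose V = mat 1" by (simp add: matrix_left_right_inverse)
  hence "z = V *v (transpose V *v z)" by (metis matrix_vector_mul_assoc matrix_vector_mul_lid)
  also have "\<dots> = (\<Sum>i\<in>UNIV. (v i \<bullet> z) *\<^sub>R v i)"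
    by (simp add: vec_eq_iff matrix_vector_mult_def transpose_def V_def inner_vec_def mult_ac)
  finally show ?thesis .
qed

lemma inner_basis_sum: "v j \<bullet> (\<Sum>i\<in>UNIV. a i *\<^sub>R v i) = a j"
proof -
  have "v j \<bullet> (\<Sum>i\<in>UNIV. a i *\<^sub>R v i) = (\<Sum>i\<in>UNIV. if j = i then a i else 0)"
    unfolding inner_sum_right inner_scaleR_right using orthonormal by (intro sum.cong) auto
  thus ?thesis by simp
qed

lemma eq_if_coords_eq: "(\<And>j. v j \<bullet> x = v j \<bullet> y) \<Longrightarrow> x = y"
  using expansion[of x] expansion[of y] by simp

lemma norm_sq_eq_sum_coords: "(norm z)\<^sup>2 = (\<Sum>i\<in>UNIV. (v i \<bullet> z)\<^sup>2)"
proof -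
  have "(norm z)\<^sup>2 = (\<Sum>i\<in>UNIV. (v i \<bullet> z) *\<^sub>R v i) \<bullet> z"
    by (simp only: power2_norm_eq_inner expansion[of z, symmetric])
  thus ?thesis by (simp add: inner_sum_left power2_eq_square)
qed

lemma inner_sum_outer_mult_vec: "v j \<bullet> ((\<Sum>i\<in>UNIV. c i *\<^sub>R outer (v i)) *v z) = c j * (v j \<bullet> z)"
  unfolding sum_outer_mult_vec by (rule inner_basis_sum)

lemma sum_outer_mult_basis: "(\<Sum>i\<in>UNIV. c i *\<^sub>R outer (v i)) *v v j = c j *\<^sub>R v j"
  by (rule eq_if_coords_eq) (simp add: inner_sum_outer_mult_vec orthonormal)

lemma eq_sum_outer_if_eigen:
  assumes "\<forall>i. A *v v i = mu i *\<^sub>R v i"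
  shows "A = (\<Sum>i\<in>UNIV. mu i *\<^sub>R outer (v i))"
proof (rule matrix_eq[THEN iffD2], rule allI)
  fix z
  have "A *v z = A *v (\<Sum>i\<in>UNIV. (v i \<bullet> z) *\<^sub>R v i)" by (subst expansion[of z]) simp
  also have "\<dots> = (\<Sum>i\<in>UNIV. (v i \<bullet> z) *\<^sub>R (A *v v i))"
    by (simp add: linear_sum[OF matrix_vector_mul_linear] o_def matrix_vector_mult_scaleR)
  also have "\<dots> = (\<Sum>i\<in>UNIV. mu i *\<^sub>R outer (v i)) *v z"
    unfolding sum_outer_mult_vec using assms by (simp add: mult.commute)
  finally show "A *v z = (\<Sum>i\<in>UNIV. mu i *\<^sub>R outer (v i)) *v z" .
qed

lemma sum_outer_symmetric:
  "((\<Sum>i\<in>UNIV. c i *\<^sub>R outer (v i)) *v x) \<bullet> y = x \<bullet> ((\<Sum>i\<in>UNIV. c i *\<^sub>R outer (v i)) *v y)"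
  unfolding sum_outer_mult_vec by (simp add: inner_sum_left inner_sum_right mult_ac inner_commute)

lemma num_distinct_eigs_sum_outer:
  "num_distinct_eigs (\<Sum>i\<in>UNIV. mu i *\<^sub>R outer (v i)) = card (range mu)"
proof -
  have "{c. \<exists>z. z \<noteq> 0 \<and> (\<Sum>i\<in>UNIV. mu i *\<^sub>R outer (v i)) *v z = c *\<^sub>R z} = range mu"
  proof (intro equalityI subsetI)
    fix c assume "c \<in> range mu"
    then obtain i where "c = mu i" by auto
    moreover have "v i \<noteq> 0" using orthonormal by (metis inner_zero_left zero_neq_one)
    ultimately show "c \<in> {c. \<exists>z. z \<noteq> 0 \<and> (\<Sum>i\<in>UNIV. mu i *\<^sub>R outer (v i)) *v z = c *\<^sub>R z}"
      using sum_outer_mult_basis by blast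
  next
    fix c assume "c \<in> {c. \<exists>z. z \<noteq> 0 \<and> (\<Sum>i\<in>UNIV. mu i *\<^sub>R outer (v i)) *v z = c *\<^sub>R z}"
    then obtain z where z: "z \<noteq> 0" "(\<Sum>i\<in>UNIV. mu i *\<^sub>R outer (v i)) *v z = c *\<^sub>R z" by auto
    obtain j where j: "v j \<bullet> z \<noteq> 0" using z(1) eq_if_coords_eq[of z 0] by auto
    have "mu j * (v j \<bullet> z) = c * (v j \<bullet> z)"
      using arg_cong[OF z(2), of "\<lambda>x. v j \<bullet> x"] by (simp add: inner_sum_outer_mult_vec)
    thus "c \<in> range mu" using j by (metis mult_cancel_right rangeI)
  qed
  thus ?thesis unfolding num_distinct_eigs_def by simp
qed

end

lemma matfun_eq_sum_outer:
  fixes v :: "'n::finite \<Rightarrow> real^'n"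
  assumes "orthonormal_basis v" and eigen: "\<forall>i. A *v v i = mu i *\<^sub>R v i"
  shows "matfun g A = (\<Sum>i\<in>UNIV. g (mu i) *\<^sub>R outer (v i))"
proof -
  interpret orthonormal_basis v by (rule assms(1))
  have "\<exists>B. \<exists>(v'::'n \<Rightarrow> real^'n) (s::'n \<Rightarrow> real). (\<forall>i j. v' i \<bullet> v' j = (if i = j then 1 else 0))
      \<and> (\<forall>i. A *v v' i = s i *\<^sub>R v' i) \<and> B = (\<Sum>i\<in>UNIV. g (s i) *\<^sub>R outer (v' i))"
    using orthonormal eigen by blast
  from someI_ex[OF this] obtain v' :: "'n \<Rightarrow> real^'n" and s where v':
    "orthonormal_basis v'" "\<forall>i. A *v v' i = s i *\<^sub>R v' i" "matfun g A = (\<Sum>i\<in>UNIV. g (s i) *\<^sub>R outer (v' i))"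
    unfolding matfun_def orthonormal_basis_def by blast
  interpret v': orthonormal_basis v' by (rule v'(1))
  have "matfun g A *v v j = g (mu j) *\<^sub>R v j" for j
  proof -
    have "s i * (v' i \<bullet> v j) = mu j * (v' i \<bullet> v j)" for i
    proof -
      have "s i * (v' i \<bullet> v j) = (A *v v' i) \<bullet> v j" using v'(2) by simp
      also have "\<dots> = v' i \<bullet> (A *v v j)"
        unfolding eq_sum_outer_if_eigen[OF eigen] by (rule sum_outer_symmetric)
      finally show ?thesis using eigen by simp
    qed
    hence g_eq: "g (s i) * (v' i \<bullet> v j) = g (mu j) * (v' i \<bullet> v j)" for i
      by (metis mult_cancel_right)
    have "matfun g A *v v j = (\<Sum>i\<in>UNIV. (g (s i) * (v' i \<bullet> v j)) *\<^sub>R v' i)"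
      unfolding v'(3) by (rule sum_outer_mult_vec)
    also have "\<dots> = g (mu j) *\<^sub>R (\<Sum>i\<in>UNIV. (v' i \<bullet> v j) *\<^sub>R v' i)"
      unfolding g_eq by (simp add: scaleR_sum_right)
    finally show ?thesis using v'.expansion[of "v j"] by simp
  qed
  thus ?thesis by (intro eq_sum_outer_if_eigen) simp
qed

lemma pinv_eq_inverse:
  fixes A B :: "real^'n^'n"
  assumes "A ** B = mat 1" "B ** A = mat 1"
  shows "pinv A = B"
  unfolding pinv_def
proof (rule the_equality)
  fix B'
  assume "A ** B' ** A = A \<and> B' ** A ** B' = B' \<and> transpose (A ** B') = A ** B' \<and> transpose (B' ** A) = B' ** A"
  hence "(B ** A) ** B' ** (A ** B) = (B ** A) ** B" by (metis matrix_mul_assoc)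
  thus "B' = B" using assms by simp
qed (use assms in simp)

lemma matrix_inv_eq_inverse:
  fixes A B :: "real^'n^'n"
  assumes "A ** B = mat 1" "B ** A = mat 1"
  shows "matrix_inv A = B"
proof -
  have "A ** matrix_inv A = mat 1 \<and> matrix_inv A ** A = mat 1"
    unfolding matrix_inv_def by (rule someI) (use assms in blast)
  thus ?thesis using assms(2) by (metis matrix_mul_assoc matrix_mul_lid matrix_mul_rid)
qed

section \<open>The penalised conjugate gradient estimator\<close>

lemma inner_vector_matrix_mult: "(a::real^'p) \<bullet> (b v* (X::real^'p^'n)) = (X *v a) \<bullet> b"
  by (metis dot_lmul_matrix inner_commute)

lemma sqrt_one_div: "0 \<le> x \<Longrightarrow> sqrt (1 / x) = sqrt x * (1 / x)"
  using sqrt_divide_self_eq[of x] by (simp add: real_sqrt_divide inverse_eq_divide)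

locale cg_ridge = orthonormal_basis v for v :: "'p::finite \<Rightarrow> real^'p" +
  fixes X :: "real^'p^'n" and y eps :: "real^'n" and beta0 :: "real^'p"
    and s :: "'p \<Rightarrow> real" and lam :: real
  assumes model: "y = X *v beta0 + eps"
    and eigen: "\<forall>i. Sigma_hat X *v v i = s i *\<^sub>R v i"
    and nondeg: "\<forall>i. (\<Sum>j\<in>{j. s j = s i}. ((transpose X *v y) \<bullet> v j)\<^sup>2) > 0"
    and lam: "lam \<ge> 0"
begin

lemma Sigma_hat_mult_vec: "Sigma_hat X *v z = (1 / real CARD('n)) *\<^sub>R (transpose X *v (X *v z))"
  unfolding Sigma_hat_def by (simp add: scaleR_matrix_vector_assoc[symmetric] matrix_vector_mul_assoc)

lemma eigenvalue_eq: "s i = (norm (X *v v i))\<^sup>2 / real CARD('n)"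
proof -
  have "s i = v i \<bullet> (Sigma_hat X *v v i)" using eigen orthonormal by simp
  thus ?thesis by (simp add: Sigma_hat_mult_vec inner_vector_matrix_mult power2_norm_eq_inner)
qed

text \<open>An eigenvector with eigenvalue 0 lies in the kernel of \<open>X\<close>, so it is orthogonal to
  \<open>X\<^sup>T y\<close>; \<open>nondeg\<close> excludes this.\<close>

lemma eigenvalue_pos: "s i > 0"
proof (rule ccontr)
  assume "\<not> s i > 0"
  moreover have "s i \<ge> 0" by (simp add: eigenvalue_eq)
  ultimately have "s i = 0" by simp
  have "((transpose X *v y) \<bullet> v j)\<^sup>2 = 0" if "s j = s i" for j
  proof -
    have "X *v v j = 0" using that \<open>s i = 0\<close> eigenvalue_eq[of j] by simp
    thus ?thesis by (simp add: inner_commute inner_vector_matrix_mult)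
  qed
  hence "(\<Sum>j\<in>{j. s j = s i}. ((transpose X *v y) \<bullet> v j)\<^sup>2) = 0" by simp
  thus False using nondeg by (metis less_irrefl)
qed

definition mu :: "'p \<Rightarrow> real" where
  "mu i = s i + lam"

lemma mu_pos: "mu i > 0"
  unfolding mu_def using eigenvalue_pos[of i] lam by simp

lemma Sigma_lam_eigen: "\<forall>i. Sigma_lam lam X *v v i = mu i *\<^sub>R v i"
  unfolding Sigma_lam_def mu_def using eigen
  by (simp add: matrix_vector_mult_add_rdistrib scaleR_matrix_vector_assoc[symmetric] algebra_simps)

lemma Sigma_lam_eq: "Sigma_lam lam X = (\<Sum>i\<in>UNIV. mu i *\<^sub>R outer (v i))"
  by (rule eq_sum_outer_if_eigen[OF Sigma_lam_eigen])

lemma matfun_Sigma_lam: "matfun g (Sigma_lam lam X) = (\<Sum>i\<in>UNIV. g (mu i) *\<^sub>R outer (v i))"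
  by (rule matfun_eq_sum_outer[OF orthonormal_basis_axioms Sigma_lam_eigen])

lemma Sigma_lam_inv_eq: "Sigma_lam_inv lam X = (\<Sum>i\<in>UNIV. (1 / mu i) *\<^sub>R outer (v i))"
proof -
  define B where "B = (\<Sum>i\<in>UNIV. (1 / mu i) *\<^sub>R outer (v i))"
  have "(Sigma_lam lam X ** B) *v z = z" for z
    by (rule eq_if_coords_eq) (simp add: matrix_vector_mul_assoc[symmetric] Sigma_lam_eq B_def
        inner_sum_outer_mult_vec mu_pos less_imp_neq[symmetric])
  hence SB: "Sigma_lam lam X ** B = mat 1" by (simp add: matrix_eq)
  hence BS: "B ** Sigma_lam lam X = mat 1" by (simp add: matrix_left_right_inverse)
  show ?thesis
  proof (cases "lam = 0")
    case True
    hence "Sigma_hat X = Sigma_lam lam X" by (simp add: Sigma_lam_def)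
    thus ?thesis using True SB BS by (simp add: Sigma_lam_inv_def pinv_eq_inverse B_def)
  next
    case False
    thus ?thesis using SB BS by (simp add: Sigma_lam_inv_def matrix_inv_eq_inverse B_def)
  qed
qed

lemma Sigma_lam_invsqrt_eq:
  "Sigma_lam_invsqrt lam X = (\<Sum>i\<in>UNIV. sqrt (1 / mu i) *\<^sub>R outer (v i))"
  unfolding Sigma_lam_invsqrt_def Sigma_lam_inv_eq
  by (rule matfun_eq_sum_outer[OF orthonormal_basis_axioms]) (simp add: sum_outer_mult_basis)

definition Y :: "'p \<Rightarrow> real" where
  "Y j = v j \<bullet> y_lam lam X y"

definition E :: "'p \<Rightarrow> real" where
  "E j = v j \<bullet> eps_lam lam X eps"

lemma inner_scaled_invsqrt:
  "v j \<bullet> ((1 / real CARD('n)) *\<^sub>R (Sigma_lam_invsqrt lam X *v z))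
    = sqrt (1 / mu j) / real CARD('n) * (v j \<bullet> z)"
  by (simp add: Sigma_lam_invsqrt_eq inner_sum_outer_mult_vec)

lemma Y_eq: "Y j = sqrt (1 / mu j) / real CARD('n) * (v j \<bullet> (transpose X *v y))"
  unfolding Y_def y_lam_def by (rule inner_scaled_invsqrt)

lemma E_eq: "E j = sqrt (1 / mu j) / real CARD('n) * (v j \<bullet> (transpose X *v eps))"
  unfolding E_def eps_lam_def by (rule inner_scaled_invsqrt)

lemma Y_minus_E: "Y j - E j = sqrt (mu j) * (v j \<bullet> beta_lam lam X beta0)"
proof -
  have "v j \<bullet> (transpose X *v y) - v j \<bullet> (transpose X *v eps) = v j \<bullet> (transpose X *v (X *v beta0))"
    unfolding model by (simp add: matrix_vector_right_distrib inner_add_right)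
  hence "Y j - E j = sqrt (1 / mu j) * (v j \<bullet> (Sigma_hat X *v beta0))"
    unfolding Y_eq E_eq Sigma_hat_mult_vec by (simp add: algebra_simps)
  also have "\<dots> = sqrt (mu j) * (1 / mu j * (v j \<bullet> (Sigma_hat X *v beta0)))"
    using mu_pos[of j] by (subst sqrt_one_div) auto
  also have "\<dots> = sqrt (mu j) * (v j \<bullet> beta_lam lam X beta0)"
    by (simp add: beta_lam_def Sigma_lam_inv_eq inner_sum_outer_mult_vec)
  finally show ?thesis .
qed

lemma inner_beta_cg:
  "v j \<bullet> beta_cg lam X y t
    = sqrt (1 / mu j) * (1 - poly (cg_poly_interp (Sigma_lam lam X) (y_lam lam X y) t) (mu j)) * Y j"
  by (simp add: beta_cg_def Sigma_lam_invsqrt_eq matfun_Sigma_lam inner_sum_outer_mult_vec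
      matrix_vector_mult_diff_rdistrib inner_diff_right Y_def algebra_simps)

lemma cg_weights_coordinates: "cg_weights (\<lambda>j. (Y j)\<^sup>2) mu"
proof
  show "mu i > 0" for i by (rule mu_pos)
  show "(Y i)\<^sup>2 \<ge> 0" for i by simp
  fix i
  obtain j where "s j = s i" "((transpose X *v y) \<bullet> v j)\<^sup>2 \<noteq> 0"
    using nondeg by (metis (mono_tags, lifting) less_irrefl mem_Collect_eq sum.neutral)
  moreover from this have "Y j \<noteq> 0" using mu_pos[of j] by (simp add: Y_eq inner_commute)
  ultimately show "\<exists>j. mu j = mu i \<and> (Y j)\<^sup>2 > 0" by (auto simp: mu_def)
qed

lemma cg_poly_interp_eq:
  "cg_poly_interp (Sigma_lam lam X) (y_lam lam X y) t = cg_residual_interp (\<lambda>j. (Y j)\<^sup>2) mu t"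
proof -
  have norm_eq: "(norm (matfun (poly P) (Sigma_lam lam X) *v y_lam lam X y))\<^sup>2
      = poly_inner (\<lambda>j. (Y j)\<^sup>2) mu P P" for P
    unfolding norm_sq_eq_sum_coords matfun_Sigma_lam inner_sum_outer_mult_vec poly_inner_def Y_def
    by (simp add: power2_eq_square mult_ac)
  have "cg_poly (Sigma_lam lam X) (y_lam lam X y) K = cg_residual (\<lambda>j. (Y j)\<^sup>2) mu K" for K
    unfolding cg_poly_def cg_residual_def residual_poly_def norm_eq conj_assoc ..
  thus ?thesis unfolding cg_poly_interp_def cg_residual_interp_def by simp
qed

lemma rho_cg_eq: "rho_cg lam X y t = \<bar>poly (pderiv (cg_residual_interp (\<lambda>j. (Y j)\<^sup>2) mu t)) 0\<bar>"
  unfolding rho_cg_def cg_poly_interp_eq ..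

lemma error_norm_eq:
  "(norm (matfun sqrt (Sigma_lam lam X) *v (beta_cg lam X y t - beta_lam lam X beta0)))\<^sup>2
    = (\<Sum>i\<in>UNIV. (E i - poly (cg_residual_interp (\<lambda>j. (Y j)\<^sup>2) mu t) (mu i) * Y i)\<^sup>2)"
  unfolding norm_sq_eq_sum_coords matfun_Sigma_lam inner_sum_outer_mult_vec inner_diff_right
    inner_beta_cg cg_poly_interp_eq
proof (rule sum.cong[OF refl])
  fix i
  have "sqrt (mu i) * sqrt (1 / mu i) = 1" using mu_pos[of i] by (simp add: real_sqrt_mult[symmetric])
  moreover have "sqrt (mu i) * (v i \<bullet> beta_lam lam X beta0) = Y i - E i" by (rule Y_minus_E[symmetric])
  ultimately show "(sqrt (mu i) * (sqrt (1 / mu i) * (1 - poly (cg_residual_interp (\<lambda>j. (Y j)\<^sup>2) mu t) (mu i)) * Y i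
      - v i \<bullet> beta_lam lam X beta0))\<^sup>2 = (E i - poly (cg_residual_interp (\<lambda>j. (Y j)\<^sup>2) mu t) (mu i) * Y i)\<^sup>2"
    by (simp add: right_diff_distrib mult.assoc[symmetric]) (simp add: algebra_simps)
qed

lemma bias_norm_eq:
  "(norm (matfun sqrt (Sigma_lam lam X) *v
      (matfun (\<lambda>x. exp (- \<rho> * x / 2)) (Sigma_lam lam X) *v beta_lam lam X beta0)))\<^sup>2
    = (\<Sum>i\<in>UNIV. exp (- (\<rho> * mu i)) * (Y i - E i)\<^sup>2)"
  unfolding norm_sq_eq_sum_coords matfun_Sigma_lam inner_sum_outer_mult_vec Y_minus_E
proof (rule sum.cong[OF refl])
  fix i
  have "(exp (- \<rho> * mu i / 2))\<^sup>2 = exp (- (\<rho> * mu i))" by (simp add: power2_eq_square exp_add[symmetric])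
  thus "(sqrt (mu i) * (exp (- \<rho> * mu i / 2) * (v i \<bullet> beta_lam lam X beta0)))\<^sup>2
      = exp (- (\<rho> * mu i)) * (sqrt (mu i) * (v i \<bullet> beta_lam lam X beta0))\<^sup>2"
    by (simp add: power_mult_distrib)
qed

lemma noise_norm_eq:
  assumes "\<rho> \<ge> 0"
  shows "(norm (matfun (\<lambda>x. sqrt (min (\<rho> * x) 1)) (Sigma_lam lam X) *v eps_lam lam X eps))\<^sup>2
    = (\<Sum>i\<in>UNIV. min (\<rho> * mu i) 1 * (E i)\<^sup>2)"
  unfolding norm_sq_eq_sum_coords matfun_Sigma_lam inner_sum_outer_mult_vec E_def[symmetric]
  using assms mu_pos by (intro sum.cong) (simp_all add: power_mult_distrib less_imp_le)

end

theorem corollary3p4: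
  fixes X :: "real^'p^'n" and y eps :: "real^'n" and beta0 :: "real^'p"
    and v :: "'p \<Rightarrow> real^'p" and s :: "'p \<Rightarrow> real"
    and lam t :: real
  assumes model: "y = X *v beta0 + eps"
    and beta0_row: "beta0 = (pinv X ** X) *v beta0"
    and v_orth: "\<forall>i j. v i \<bullet> v j = (if i = j then 1 else 0)"
    and v_eig: "\<forall>i. Sigma_hat X *v v i = s i *\<^sub>R v i"
    and nondeg: "\<forall>i. (\<Sum>j\<in>{j. s j = s i}. ((transpose X *v y) \<bullet> v j)\<^sup>2) > 0"
    and lam: "lam \<ge> 0"
    and t: "0 \<le> t" "t \<le> real (num_distinct_eigs (Sigma_lam lam X))"
  shows "(norm (matfun sqrt (Sigma_lam lam X) *v (beta_cg lam X y t - beta_lam lam X beta0)))\<^sup>2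
    \<le> 2 * (norm (matfun sqrt (Sigma_lam lam X) *v
               (matfun (\<lambda>x. exp (- rho_cg lam X y t * x / 2)) (Sigma_lam lam X) *v beta_lam lam X beta0)))\<^sup>2
      + 2 * (norm (matfun (\<lambda>x. sqrt (min (rho_cg lam X y t * x) 1)) (Sigma_lam lam X) *v eps_lam lam X eps))\<^sup>2"
proof -
  interpret cg_ridge v X y eps beta0 s lam
    using model v_orth v_eig nondeg lam by unfold_locales
  interpret cg_weights "\<lambda>j. (Y j)\<^sup>2" mu by (rule cg_weights_coordinates)
  have "t \<le> real (card (range mu))"
    using t(2) by (simp add: Sigma_lam_eq num_distinct_eigs_sum_outer)
  from cg_residual_interp_error_bound[OF refl t(1) this, of E]
  show ?thesis
    unfolding error_norm_eq bias_norm_eq noise_norm_eq[OF abs_ge_zero] rho_cg_eq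
    by (simp add: mult.assoc)
qed

end
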